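(* Fix reals $a<b$ with $\tau_0\notin[a,b]$, $S=T\cap[a,b]$, $m\ge1$, points $q_1,\ldots,q_r\in\mathbf M$, a subset $\mathbf\Pi\subseteq\mathbf M$ and pairwise disjoint sets $\Pi_1,\ldots,\Pi_d\subseteq\mathbf M$ with $\mathbf\Pi\subseteq\Pi_1\cup\cdots\cup\Pi_d$. Suppose reals $\alpha_{ij}\le\beta_{ij}$ ($1\le i\le r$, $1\le j\le d$) satisfy $\alpha_{ij}\le\tau(q_i,q)\le\beta_{ij}$ for all $q\in\Pi_j$, and reals $a_{ij}\le b_{ij}$ ($1\le i\le j\le d$) satisfy $\tau(u,v)\in[a_{ij},b_{ij}]$ whenever $u\in\Pi_i$, $v\in\Pi_j$, $u\ne v$, $\tau(u,v)\in[a,b]$. Let $\mathcal A$ be any set of constraints satisfied by the tuple $(x_{ij}^{(k)}(C),y_{ij}^{(k)}(C))$ of every $S$-code $C\subset\mathbf\Pi$. Let $c^*$ be the supremum of $c_1+\cdots+c_d$ over real variables $c_j$, $x_{ij}^{(k)}$ ($1\le i\le j\le d$, with $x_{ji}^{(k)}:=x_{ij}^{(k)}$), $y_{ij}^{(k)}$ ($1\le i\le r$, $1\le j\le d$), $k=0,\ldots,2m-1$, subject to: (11) for each $k=0,\ldots,2m-1$ the symmetric $(r+d)\times(r+d)$ matrix $\Gamma_k$ with entries $\Phi_k(\tau(q_i,q_{i'}))$ in position $(i,i')$ ($i,i'\le r$), $\sum_{l=0}^k p_{kl}y_{ij}^{(l)}$ in positions $(i,r+j)$ and $(r+j,i)$,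 and $\sum_{l=0}^k p_{kl}x_{jj'}^{(l)}$ in position $(r+j,r+j')$, is positive semidefinite; (13) $H_m(y_{ij}^{(0)},\ldots,y_{ij}^{(2m-1)},[\alpha_{ij},\beta_{ij}])\succeq0$ for all $i\le r$, $j\le d$; (14) $H_m(x_{ij}^{(0)},\ldots,x_{ij}^{(2m-1)},[a_{ij},b_{ij}])\succeq0$ for $1\le i<j\le d$; (15) $H_m(z_{0,i},\ldots,z_{2m-1,i},[a_{ii},b_{ii}])\succeq0$ for $i=1,\ldots,d$, where $z_{k,i}:=x_{ii}^{(k)}-c_i\tau_0^k$ for $k\ge1$ and $z_{0,i}:=x_{ii}^{(0)}-c_i$; (16) the constraints $\mathcal A$; (17) $y_{ij}^{(0)}=c_j\ge0$ for all $i,j$, and the $(d+1)\times(d+1)$ matrix $\begin{pmatrix}1&c^{T}\\ c&(x_{ij}^{(0)})_{i,j=1}^d\end{pmatrix}$, $c=(c_1,\ldots,c_d)^T$, is positive semidefinite. Then $A(\mathbf\Pi,S)\le c^*$.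
   Context: $\mathbf M$ is a 2-point-homogeneous space with associated real function $\tau(x,y)$, $\tau_0:=\tau(x,x)$, $T=\{\tau(x,y):x,y\in\mathbf M\}$, and zonal spherical functions $\Phi_k(t)=\sum_{l=0}^k p_{kl}t^l$ assumed to be real polynomials of degree $k$ with $\Phi_k(\tau_0)=1$ such that for every finite $\{x_1,\ldots,x_N\}\subset\mathbf M$ and $k\ge0$ the matrix $(\Phi_k(\tau(x_i,x_j)))$ is positive semidefinite. An $S$-code is a finite $C\subset\mathbf M$ with $\tau(x,y)\in S$ for all distinct $x,y\in C$; $A(\mathbf\Pi,S)$ is the largest cardinality of an $S$-code contained in $\mathbf\Pi$. For an $S$-code $C\subset\mathbf\Pi$ and $C_j:=C\cap\Pi_j$: $x_{ij}^{(k)}(C)=\sum_{u\in C_i}\sum_{v\in C_j}\tau(u,v)^k$ (including $u=v$ when $i=j$) and $y_{ij}^{(k)}(C)=\sum_{q\in C_j}\tau(q_i,q)^k$, with $\tau^0:=1$. For reals $s_0,\ldots,s_{2m-1}$ and $\alpha\le\beta$: $R_m=(s_{i+j-2})_{i,j=1}^m$, $F_m^+(\alpha)=(s_{i+j-1}-\alpha s_{i+j-2})$, $F_m^-(\beta)=(\beta s_{i+j-2}-s_{i+j-1})$, $H_m(s_0,\ldots,s_{2m-1},[\alpha,\beta])=\operatorname{diag}(R_m,F_m^+(\alpha),F_m^-(\beta))$. *)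

theory Defs
  imports Complex_Main "HOL-Library.Extended_Real"
begin

definition psd_on :: "nat set \<Rightarrow> (nat \<Rightarrow> nat \<Rightarrow> real) \<Rightarrow> bool" where
  "psd_on I A \<longleftrightarrow> (\<forall>i\<in>I. \<forall>j\<in>I. A i j = A j i) \<and>
     (\<forall>v :: nat \<Rightarrow> real. 0 \<le> (\<Sum>i\<in>I. \<Sum>j\<in>I. v i * A i j * v j))"

definition Phi :: "(nat \<Rightarrow> nat \<Rightarrow> real) \<Rightarrow> nat \<Rightarrow> real \<Rightarrow> real" where
  "Phi p k t = (\<Sum>l\<le>k. p k l * t ^ l)"

text \<open>H_m(s_0,...,s_{2m-1},[alpha,beta]) = diag(R_m, F_m^+(alpha), F_m^-(beta)), a 3m x 3m
  matrix with (0-based) indices 0..3m-1.  With 1-based block indices i,j the entries are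
  s_{i+j-2}, s_{i+j-1} - alpha s_{i+j-2}, beta s_{i+j-2} - s_{i+j-1}; in 0-based indices
  i,j these are s_{i+j}, s_{i+j+1} - alpha s_{i+j}, beta s_{i+j} - s_{i+j+1}.\<close>
definition Hmat :: "nat \<Rightarrow> (nat \<Rightarrow> real) \<Rightarrow> real \<Rightarrow> real \<Rightarrow> nat \<Rightarrow> nat \<Rightarrow> real" where
  "Hmat m s \<alpha> \<beta> i j =
     (if i < m \<and> j < m then s (i + j)
      else if m \<le> i \<and> i < 2*m \<and> m \<le> j \<and> j < 2*m then
        s ((i - m) + (j - m) + 1) - \<alpha> * s ((i - m) + (j - m))
      else if 2*m \<le> i \<and> i < 3*m \<and> 2*m \<le> j \<and> j < 3*m then
        \<beta> * s ((i - 2*m) + (j - 2*m)) - s ((i - 2*m) + (j - 2*m) + 1)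
      else 0)"

definition H_psd :: "nat \<Rightarrow> (nat \<Rightarrow> real) \<Rightarrow> real \<Rightarrow> real \<Rightarrow> bool" where
  "H_psd m s \<alpha> \<beta> \<longleftrightarrow> psd_on {0..<3*m} (Hmat m s \<alpha> \<beta>)"

definition is_Scode :: "('a \<Rightarrow> 'a \<Rightarrow> real) \<Rightarrow> real set \<Rightarrow> 'a set \<Rightarrow> bool" where
  "is_Scode \<tau> S C \<longleftrightarrow> finite C \<and> (\<forall>x\<in>C. \<forall>y\<in>C. x \<noteq> y \<longrightarrow> \<tau> x y \<in> S)"

definition A_code :: "('a \<Rightarrow> 'a \<Rightarrow> real) \<Rightarrow> 'a set \<Rightarrow> real set \<Rightarrow> ereal" where
  "A_code \<tau> P S = Sup {ereal (real (card C)) | C. is_Scode \<tau> S C \<and> C \<subseteq> P}"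

text \<open>x_{ij}^{(k)}(C) and y_{ij}^{(k)}(C), with C_j = C \<inter> Pi_j (note 0^0 = 1).\<close>
definition code_x :: "('a \<Rightarrow> 'a \<Rightarrow> real) \<Rightarrow> (nat \<Rightarrow> 'a set) \<Rightarrow> 'a set \<Rightarrow> nat \<Rightarrow> nat \<Rightarrow> nat \<Rightarrow> real" where
  "code_x \<tau> Pi C k i j = (\<Sum>u\<in>C \<inter> Pi i. \<Sum>v\<in>C \<inter> Pi j. \<tau> u v ^ k)"

definition code_y :: "('a \<Rightarrow> 'a \<Rightarrow> real) \<Rightarrow> (nat \<Rightarrow> 'a set) \<Rightarrow> (nat \<Rightarrow> 'a) \<Rightarrow> 'a set \<Rightarrow> nat \<Rightarrow> nat \<Rightarrow> nat \<Rightarrow> real" where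
  "code_y \<tau> Pi q C k i j = (\<Sum>w\<in>C \<inter> Pi j. \<tau> (q i) w ^ k)"

definition symx :: "(nat \<Rightarrow> nat \<Rightarrow> nat \<Rightarrow> real) \<Rightarrow> nat \<Rightarrow> nat \<Rightarrow> nat \<Rightarrow> real" where
  "symx x k i j = (if i \<le> j then x k i j else x k j i)"

text \<open>The (r+d) x (r+d) matrix Gamma_k of constraint (11), 1-based indices 1..r+d.\<close>
definition Gamma :: "('a \<Rightarrow> 'a \<Rightarrow> real) \<Rightarrow> (nat \<Rightarrow> nat \<Rightarrow> real) \<Rightarrow> (nat \<Rightarrow> 'a) \<Rightarrow> nat \<Rightarrow>
    (nat \<Rightarrow> nat \<Rightarrow> nat \<Rightarrow> real) \<Rightarrow> (nat \<Rightarrow> nat \<Rightarrow> nat \<Rightarrow> real) \<Rightarrow> nat \<Rightarrow> nat \<Rightarrow> nat \<Rightarrow> real" where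
  "Gamma \<tau> p q r xs y k i i' =
     (if i \<le> r \<and> i' \<le> r then Phi p k (\<tau> (q i) (q i'))
      else if i \<le> r then (\<Sum>l\<le>k. p k l * y l i (i' - r))
      else if i' \<le> r then (\<Sum>l\<le>k. p k l * y l i' (i - r))
      else (\<Sum>l\<le>k. p k l * xs l (i - r) (i' - r)))"

text \<open>The (d+1) x (d+1) matrix of constraint (17), indices 0..d.\<close>
definition Cmat :: "(nat \<Rightarrow> real) \<Rightarrow> (nat \<Rightarrow> nat \<Rightarrow> nat \<Rightarrow> real) \<Rightarrow> nat \<Rightarrow> nat \<Rightarrow> real" where
  "Cmat c xs i j = (if i = 0 \<and> j = 0 then 1 else if i = 0 then c j else if j = 0 then c i
                    else xs 0 i j)"

end

theory Submission
  imports Defs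
begin

(* Every S-code C inside Pi gives a feasible point of the program with value |C|:
   take c_j = |C \<inter> Pi_j| and for x, y the moment sums x_ij^(k)(C), y_ij^(k)(C).
   The matrix Gamma_k is then the block sum of the positive semidefinite kernel Phi_k(tau(u, w))
   over the blocks {q_1}, ..., {q_r}, C \<inter> Pi_1, ..., C \<inter> Pi_d, hence positive semidefinite.
   Each H_m block is a moment matrix of finitely many points t_w in [alpha, beta]: its quadratic
   forms are sums of rho_w (\<Sum>_i u_i t_w^i)^2 with rho_w among 1, t_w - alpha, beta - t_w.
   For x_ii the pairs u = v contribute exactly c_i tau_0^k, which (15) removes, so that only
   distances tau(u, v) \<in> [a_ii, b_ii] remain; and x_ij^(0) = c_i c_j makes the matrix of (17)
   the rank-one matrix (1, c)(1, c)^T. *)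

lemma psd_kernel_form_nonneg:
  fixes K :: "'a \<Rightarrow> 'a \<Rightarrow> real" and pt :: "'b \<Rightarrow> 'a"
  assumes K: "\<And>N (xp :: nat \<Rightarrow> 'a). psd_on {1..N} (\<lambda>i j. K (xp i) (xp j))"
    and fin: "finite I"
  shows "0 \<le> (\<Sum>a\<in>I. \<Sum>b\<in>I. w a * K (pt a) (pt b) * w b)"
proof -
  obtain h where h: "bij_betw h {1..card I} I"
    using ex_bij_betw_nat_finite_1[OF fin] by blast
  have "0 \<le> (\<Sum>i\<in>{1..card I}. \<Sum>j\<in>{1..card I}. w (h i) * K (pt (h i)) (pt (h j)) * w (h j))"
    using K[of "card I" "pt \<circ> h"] unfolding psd_on_def by simp
  also have "\<dots> = (\<Sum>i\<in>{1..card I}. \<Sum>b\<in>I. w (h i) * K (pt (h i)) (pt b) * w b)"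
    by (intro sum.cong refl sum.reindex_bij_betw[OF h])
  also have "\<dots> = (\<Sum>a\<in>I. \<Sum>b\<in>I. w a * K (pt a) (pt b) * w b)"
    by (rule sum.reindex_bij_betw[OF h])
  finally show ?thesis .
qed

lemma psd_kernel_sym:
  fixes K :: "'a \<Rightarrow> 'a \<Rightarrow> real"
  assumes K: "\<And>N (xp :: nat \<Rightarrow> 'a). psd_on {1..N} (\<lambda>i j. K (xp i) (xp j))"
  shows "K u w = K w u"
  using K[of 2 "\<lambda>i. if i = 1 then u else w"] unfolding psd_on_def by force

lemma psd_on_kernel_block_sums:
  fixes K :: "'a \<Rightarrow> 'a \<Rightarrow> real" and G :: "nat \<Rightarrow> 'a set"
  assumes K: "\<And>N (xp :: nat \<Rightarrow> 'a). psd_on {1..N} (\<lambda>i j. K (xp i) (xp j))"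
    and fin: "finite J" "\<And>i. i \<in> J \<Longrightarrow> finite (G i)"
  shows "psd_on J (\<lambda>i j. \<Sum>u\<in>G i. \<Sum>w\<in>G j. K u w)"
  unfolding psd_on_def
proof (intro conjI allI ballI)
  fix i j
  show "(\<Sum>u\<in>G i. \<Sum>w\<in>G j. K u w) = (\<Sum>u\<in>G j. \<Sum>w\<in>G i. K u w)"
    by (subst sum.swap) (intro sum.cong refl psd_kernel_sym[OF K])
next
  fix v :: "nat \<Rightarrow> real"
  have "(\<Sum>i\<in>J. \<Sum>j\<in>J. v i * (\<Sum>u\<in>G i. \<Sum>w\<in>G j. K u w) * v j)
      = (\<Sum>i\<in>J. \<Sum>u\<in>G i. \<Sum>j\<in>J. \<Sum>w\<in>G j. v i * K u w * v j)"
    by (simp add: sum_distrib_left sum_distrib_right mult.assoc, subst sum.swap, rule refl)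
  also have "\<dots> = (\<Sum>(i, u)\<in>Sigma J G. \<Sum>(j, w)\<in>Sigma J G. v i * K u w * v j)"
  proof -
    have "\<forall>i\<in>J. finite (G i)" using fin(2) by blast
    then show ?thesis by (simp only: sum.Sigma[OF fin(1), symmetric])
  qed
  also have "\<dots> \<ge> 0"
    using psd_kernel_form_nonneg[where K = K, OF K, where I = "Sigma J G" and w = "v \<circ> fst" and pt = snd]
      fin by (simp add: split_def)
  finally show "0 \<le> (\<Sum>i\<in>J. \<Sum>j\<in>J. v i * (\<Sum>u\<in>G i. \<Sum>w\<in>G j. K u w) * v j)" .
qed

lemma moment_form_nonneg:
  fixes W :: "'b set" and t \<rho> :: "'b \<Rightarrow> real" and u :: "nat \<Rightarrow> real"
  assumes "\<And>w. w \<in> W \<Longrightarrow> 0 \<le> \<rho> w"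
  shows "0 \<le> (\<Sum>i<m. \<Sum>j<m. u i * (\<Sum>w\<in>W. \<rho> w * t w ^ (i + j)) * u j)"
proof -
  have "(\<Sum>i<m. \<Sum>j<m. u i * (\<Sum>w\<in>W. \<rho> w * t w ^ (i + j)) * u j)
      = (\<Sum>w\<in>W. \<rho> w * (\<Sum>i<m. u i * t w ^ i)\<^sup>2)"
    by (simp add: power2_eq_square sum_product sum_distrib_left sum_distrib_right power_add
        mult_ac sum.swap[of _ W])
  also have "\<dots> \<ge> 0" using assms by (intro sum_nonneg) auto
  finally show ?thesis .
qed

lemma sum_three_blocks:
  fixes h :: "nat \<Rightarrow> 'b::comm_monoid_add"
  shows "(\<Sum>i\<in>{0..<3*m}. h i) = (\<Sum>i<m. h i) + (\<Sum>i<m. h (m + i)) + (\<Sum>i<m. h (2*m + i))"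
proof -
  have "(\<Sum>i\<in>{0..<3*m}. h i) = (\<Sum>i\<in>{0..<m}. h i) + (\<Sum>i\<in>{m..<2*m}. h i) + (\<Sum>i\<in>{2*m..<3*m}. h i)"
    by (simp add: lessThan_atLeast0 sum.atLeastLessThan_concat)
  also have "(\<Sum>i\<in>{0..<m}. h i) = (\<Sum>i<m. h i)" by (simp add: lessThan_atLeast0)
  also have "(\<Sum>i\<in>{m..<2*m}. h i) = (\<Sum>i<m. h (m + i))"
    using sum.shift_bounds_nat_ivl[of h 0 m m] by (simp add: mult_2 lessThan_atLeast0 add.commute)
  also have "(\<Sum>i\<in>{2*m..<3*m}. h i) = (\<Sum>i<m. h (2*m + i))"
    using sum.shift_bounds_nat_ivl[of h 0 "2*m" m] by (simp add: lessThan_atLeast0 add.commute)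
  finally show ?thesis .
qed

lemma H_psd_power_sums:
  fixes W :: "'b set" and t :: "'b \<Rightarrow> real"
  assumes bd: "\<And>w. w \<in> W \<Longrightarrow> t w \<in> {\<alpha>..\<beta>}"
  shows "H_psd m (\<lambda>k. \<Sum>w\<in>W. t w ^ k) \<alpha> \<beta>"
  unfolding H_psd_def psd_on_def
proof (intro conjI allI ballI)
  let ?s = "\<lambda>k. \<Sum>w\<in>W. t w ^ k"
  fix i j
  show "Hmat m ?s \<alpha> \<beta> i j = Hmat m ?s \<alpha> \<beta> j i"
    by (simp add: Hmat_def add.commute)
next
  let ?s = "\<lambda>k. \<Sum>w\<in>W. t w ^ k"
  fix v :: "nat \<Rightarrow> real"
  have lower: "?s (Suc k) - \<alpha> * ?s k = (\<Sum>w\<in>W. (t w - \<alpha>) * t w ^ k)" for k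
    by (simp add: sum_subtractf sum_distrib_left algebra_simps)
  have upper: "\<beta> * ?s k - ?s (Suc k) = (\<Sum>w\<in>W. (\<beta> - t w) * t w ^ k)" for k
    by (simp add: sum_subtractf sum_distrib_left algebra_simps)
  have "(\<Sum>i\<in>{0..<3*m}. \<Sum>j\<in>{0..<3*m}. v i * Hmat m ?s \<alpha> \<beta> i j * v j)
     = (\<Sum>i<m. \<Sum>j<m. v i * (\<Sum>w\<in>W. 1 * t w ^ (i + j)) * v j)
     + (\<Sum>i<m. \<Sum>j<m. v (m + i) * (\<Sum>w\<in>W. (t w - \<alpha>) * t w ^ (i + j)) * v (m + j))
     + (\<Sum>i<m. \<Sum>j<m. v (2*m + i) * (\<Sum>w\<in>W. (\<beta> - t w) * t w ^ (i + j)) * v (2*m + j))"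
    by (simp add: sum_three_blocks sum.distrib Hmat_def lower[symmetric] upper[symmetric])
  also have "\<dots> \<ge> 0"
    using bd by (intro add_nonneg_nonneg moment_form_nonneg) auto
  finally show "0 \<le> (\<Sum>i\<in>{0..<3*m}. \<Sum>j\<in>{0..<3*m}. v i * Hmat m ?s \<alpha> \<beta> i j * v j)" .
qed

lemma psd_on_Cmat_rank_one:
  assumes "\<And>i j. xs 0 i j = c i * c j"
  shows "psd_on {0..d} (Cmat c xs)"
  unfolding psd_on_def
proof (intro conjI allI ballI)
  fix i j show "Cmat c xs i j = Cmat c xs j i" by (simp add: Cmat_def assms)
next
  fix v :: "nat \<Rightarrow> real"
  have "(\<Sum>i\<in>{0..d}. \<Sum>j\<in>{0..d}. v i * Cmat c xs i j * v j)
      = (\<Sum>i\<in>{0..d}. \<Sum>j\<in>{0..d}. (if i = 0 then 1 else c i) * v i * ((if j = 0 then 1 else c j) * v j))"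
    by (intro sum.cong refl) (simp add: Cmat_def assms)
  also have "\<dots> = (\<Sum>i\<in>{0..d}. (if i = 0 then 1 else c i) * v i)\<^sup>2"
    by (simp add: power2_eq_square sum_product)
  finally show "0 \<le> (\<Sum>i\<in>{0..d}. \<Sum>j\<in>{0..d}. v i * Cmat c xs i j * v j)" by simp
qed

lemma card_eq_sum_card_Int:
  assumes "finite C" "finite J" "C \<subseteq> (\<Union>j\<in>J. Pi j)"
    and "\<And>i j. i \<in> J \<Longrightarrow> j \<in> J \<Longrightarrow> i \<noteq> j \<Longrightarrow> Pi i \<inter> Pi j = {}"
  shows "card C = (\<Sum>j\<in>J. card (C \<inter> Pi j))"
proof -
  have "C = (\<Union>j\<in>J. C \<inter> Pi j)" using assms(3) by blast
  also have "card \<dots> = (\<Sum>j\<in>J. card (C \<inter> Pi j))"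
    using assms by (intro card_UN_disjoint) auto
  finally show ?thesis .
qed

lemma code_x_commute:
  assumes "\<And>u w. \<tau> u w = \<tau> w u"
  shows "code_x \<tau> Pi C k i j = code_x \<tau> Pi C k j i"
  unfolding code_x_def by (subst sum.swap) (simp add: assms)

lemma symx_code_x:
  assumes "\<And>u w. \<tau> u w = \<tau> w u"
  shows "symx (code_x \<tau> Pi C) = code_x \<tau> Pi C"
  by (intro ext) (simp add: symx_def code_x_commute[OF assms])

lemma code_x_0: "code_x \<tau> Pi C 0 i j = real (card (C \<inter> Pi i)) * real (card (C \<inter> Pi j))"
  by (simp add: code_x_def)

lemma code_y_0: "code_y \<tau> Pi q C 0 i j = real (card (C \<inter> Pi j))"
  by (simp add: code_y_def)

lemma H_psd_code_y:
  assumes "\<And>w. w \<in> C \<inter> Pi j \<Longrightarrow> \<tau> (q i) w \<in> {\<alpha>..\<beta>}"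
  shows "H_psd m (\<lambda>k. code_y \<tau> Pi q C k i j) \<alpha> \<beta>"
  unfolding code_y_def using assms by (rule H_psd_power_sums)

lemma code_x_eq_sum_Times:
  "code_x \<tau> Pi C k i j = (\<Sum>z\<in>(C \<inter> Pi i) \<times> (C \<inter> Pi j). case_prod \<tau> z ^ k)"
  by (simp add: code_x_def sum.cartesian_product split_def)

lemma H_psd_code_x:
  assumes "\<And>u v. u \<in> C \<inter> Pi i \<Longrightarrow> v \<in> C \<inter> Pi j \<Longrightarrow> \<tau> u v \<in> {\<alpha>..\<beta>}"
  shows "H_psd m (\<lambda>k. code_x \<tau> Pi C k i j) \<alpha> \<beta>"
  unfolding code_x_eq_sum_Times using assms by (intro H_psd_power_sums) auto

lemma code_x_diag:
  assumes "\<And>u. \<tau> u u = \<tau>0" "finite C"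
  shows "code_x \<tau> Pi C k i i
    = (\<Sum>z\<in>{z \<in> (C \<inter> Pi i) \<times> (C \<inter> Pi i). fst z \<noteq> snd z}. case_prod \<tau> z ^ k)
      + real (card (C \<inter> Pi i)) * \<tau>0 ^ k"
proof -
  let ?A = "C \<inter> Pi i"
  let ?W = "{z \<in> ?A \<times> ?A. fst z \<noteq> snd z}"
  let ?D = "(\<lambda>u. (u, u)) ` ?A"
  have diagonal: "(\<Sum>z\<in>?D. case_prod \<tau> z ^ k) = real (card ?A) * \<tau>0 ^ k"
    by (subst sum.reindex) (auto simp: inj_on_def assms(1))
  have "code_x \<tau> Pi C k i i = (\<Sum>z\<in>?A \<times> ?A. case_prod \<tau> z ^ k)"
    by (rule code_x_eq_sum_Times)
  also have "?A \<times> ?A = ?W \<union> ?D" by auto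
  also have "(\<Sum>z\<in>?W \<union> ?D. case_prod \<tau> z ^ k)
      = (\<Sum>z\<in>?W. case_prod \<tau> z ^ k) + (\<Sum>z\<in>?D. case_prod \<tau> z ^ k)"
    using assms(2) by (intro sum.union_disjoint) auto
  finally show ?thesis unfolding diagonal .
qed

lemma H_psd_code_x_diag:
  assumes "\<And>u. \<tau> u u = \<tau>0" "finite C"
    and "\<And>u v. u \<in> C \<inter> Pi i \<Longrightarrow> v \<in> C \<inter> Pi i \<Longrightarrow> u \<noteq> v \<Longrightarrow> \<tau> u v \<in> {\<alpha>..\<beta>}"
  shows "H_psd m (\<lambda>k. code_x \<tau> Pi C k i i - real (card (C \<inter> Pi i)) * \<tau>0 ^ k) \<alpha> \<beta>"
  using assms(3)
  by (simp add: code_x_diag[OF assms(1,2)], intro H_psd_power_sums) auto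

lemma Phi_sum_powers: "(\<Sum>l\<le>k. p k l * (\<Sum>w\<in>A. t w ^ l)) = (\<Sum>w\<in>A. Phi p k (t w))"
  unfolding Phi_def by (simp add: sum_distrib_left) (rule sum.swap)

lemma Phi_double_sum_powers:
  "(\<Sum>l\<le>k. p k l * (\<Sum>u\<in>A. \<Sum>w\<in>B. t u w ^ l)) = (\<Sum>u\<in>A. \<Sum>w\<in>B. Phi p k (t u w))"
proof -
  have "(\<Sum>l\<le>k. p k l * (\<Sum>u\<in>A. \<Sum>w\<in>B. t u w ^ l)) = (\<Sum>l\<le>k. \<Sum>u\<in>A. p k l * (\<Sum>w\<in>B. t u w ^ l))"
    by (simp only: sum_distrib_left)
  also have "\<dots> = (\<Sum>u\<in>A. \<Sum>l\<le>k. p k l * (\<Sum>w\<in>B. t u w ^ l))"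
    by (rule sum.swap)
  finally show ?thesis by (simp only: Phi_sum_powers)
qed

definition code_blocks :: "(nat \<Rightarrow> 'a) \<Rightarrow> nat \<Rightarrow> (nat \<Rightarrow> 'a set) \<Rightarrow> 'a set \<Rightarrow> nat \<Rightarrow> 'a set" where
  "code_blocks q r Pi C i = (if i \<le> r then {q i} else C \<inter> Pi (i - r))"

lemma Gamma_code_eq_block_sums:
  assumes "\<And>u w. \<tau> u w = \<tau> w u"
  shows "Gamma \<tau> p q r (code_x \<tau> Pi C) (code_y \<tau> Pi q C) k
    = (\<lambda>i i'. \<Sum>u\<in>code_blocks q r Pi C i. \<Sum>w\<in>code_blocks q r Pi C i'. Phi p k (\<tau> u w))"
  by (intro ext) (simp add: Gamma_def code_blocks_def code_x_def code_y_def Phi_sum_powers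
      Phi_double_sum_powers, simp add: assms)

lemma Gamma_code_psd:
  assumes "\<And>u w. \<tau> u w = \<tau> w u"
    and "\<And>N (xp :: nat \<Rightarrow> 'a). psd_on {1..N} (\<lambda>i j. Phi p k (\<tau> (xp i) (xp j)))"
    and "finite C"
  shows "psd_on {1..r+d} (Gamma \<tau> p q r (code_x \<tau> Pi C) (code_y \<tau> Pi q C) k)"
proof -
  have "psd_on {1..r+d} (\<lambda>i i'. \<Sum>u\<in>code_blocks q r Pi C i. \<Sum>w\<in>code_blocks q r Pi C i'. Phi p k (\<tau> u w))"
    using assms(3) by (intro psd_on_kernel_block_sums[OF assms(2)]) (auto simp: code_blocks_def)
  then show ?thesis unfolding Gamma_code_eq_block_sums[OF assms(1)] .
qed

theorem theorem7p3:
  fixes \<tau> :: "'a \<Rightarrow> 'a \<Rightarrow> real" and \<tau>0 :: real and p :: "nat \<Rightarrow> nat \<Rightarrow> real"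
    and a b :: real and m r d :: nat and q :: "nat \<Rightarrow> 'a"
    and P :: "'a set" and Pi :: "nat \<Rightarrow> 'a set"
    and \<alpha> \<beta> aa bb :: "nat \<Rightarrow> nat \<Rightarrow> real"
    and Acon :: "(nat \<Rightarrow> nat \<Rightarrow> nat \<Rightarrow> real) \<Rightarrow> (nat \<Rightarrow> nat \<Rightarrow> nat \<Rightarrow> real) \<Rightarrow> bool"
    and S :: "real set"
  assumes tau_sym: "\<And>x y. \<tau> x y = \<tau> y x"
    and tau_diag: "\<And>x. \<tau> x x = \<tau>0"
    and Phi_deg: "\<And>k. p k k \<noteq> 0"
    and Phi_one: "\<And>k. Phi p k \<tau>0 = 1"
    and Phi_psd: "\<And>k N (xp :: nat \<Rightarrow> 'a).
                    psd_on {1..N} (\<lambda>i j. Phi p k (\<tau> (xp i) (xp j)))"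
    and ab: "a < b" and tau0_out: "\<tau>0 \<notin> {a..b}"
    and S_def: "S = range (\<lambda>(x, y). \<tau> x y) \<inter> {a..b}"
    and m_pos: "1 \<le> m"
    and Pi_disj: "\<And>i j. i \<in> {1..d} \<Longrightarrow> j \<in> {1..d} \<Longrightarrow> i \<noteq> j \<Longrightarrow> Pi i \<inter> Pi j = {}"
    and P_sub: "P \<subseteq> (\<Union>j\<in>{1..d}. Pi j)"
    and \<alpha>\<beta>: "\<And>i j. i \<in> {1..r} \<Longrightarrow> j \<in> {1..d} \<Longrightarrow> \<alpha> i j \<le> \<beta> i j"
    and \<alpha>\<beta>_bd: "\<And>i j w. i \<in> {1..r} \<Longrightarrow> j \<in> {1..d} \<Longrightarrow> w \<in> Pi j \<Longrightarrow>
                   \<alpha> i j \<le> \<tau> (q i) w \<and> \<tau> (q i) w \<le> \<beta> i j"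
    and ab_le: "\<And>i j. 1 \<le> i \<Longrightarrow> i \<le> j \<Longrightarrow> j \<le> d \<Longrightarrow> aa i j \<le> bb i j"
    and ab_bd: "\<And>i j u v. 1 \<le> i \<Longrightarrow> i \<le> j \<Longrightarrow> j \<le> d \<Longrightarrow> u \<in> Pi i \<Longrightarrow> v \<in> Pi j \<Longrightarrow>
                   u \<noteq> v \<Longrightarrow> \<tau> u v \<in> {a..b} \<Longrightarrow> \<tau> u v \<in> {aa i j..bb i j}"
    and Acon_codes: "\<And>C. is_Scode \<tau> S C \<Longrightarrow> C \<subseteq> P \<Longrightarrow>
                        Acon (code_x \<tau> Pi C) (code_y \<tau> Pi q C)"
  shows "A_code \<tau> P S \<le> Sup {ereal (\<Sum>j\<in>{1..d}. c j) | c x y.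
     (\<forall>k<2*m. psd_on {1..r+d} (Gamma \<tau> p q r (symx x) y k)) \<and>
     (\<forall>i\<in>{1..r}. \<forall>j\<in>{1..d}. H_psd m (\<lambda>k. y k i j) (\<alpha> i j) (\<beta> i j)) \<and>
     (\<forall>i j. 1 \<le> i \<and> i < j \<and> j \<le> d \<longrightarrow> H_psd m (\<lambda>k. x k i j) (aa i j) (bb i j)) \<and>
     (\<forall>i\<in>{1..d}. H_psd m (\<lambda>k. x k i i - c i * \<tau>0 ^ k) (aa i i) (bb i i)) \<and>
     Acon (symx x) y \<and>
     (\<forall>i\<in>{1..r}. \<forall>j\<in>{1..d}. y 0 i j = c j) \<and> (\<forall>j\<in>{1..d}. 0 \<le> c j) \<and>
     psd_on {0..d} (Cmat c (symx x))}"
proof -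
  let "_ \<le> Sup ?R" = ?thesis
  have "ereal (real (card C)) \<in> ?R" if C: "is_Scode \<tau> S C" "C \<subseteq> P" for C
  proof -
    define c where "c j = real (card (C \<inter> Pi j))" for j
    define x where "x = code_x \<tau> Pi C"
    define y where "y = code_y \<tau> Pi q C"
    have fin: "finite C" using C(1) by (simp add: is_Scode_def)
    have pair_bd: "\<tau> u v \<in> {aa i j..bb i j}"
      if "1 \<le> i" "i \<le> j" "j \<le> d" "u \<in> C \<inter> Pi i" "v \<in> C \<inter> Pi j" "u \<noteq> v" for i j u v
      using C(1) that by (intro ab_bd) (auto simp: is_Scode_def S_def)
    have x_sym: "symx x = x" unfolding x_def by (rule symx_code_x[OF tau_sym])
    have "card C = (\<Sum>j\<in>{1..d}. card (C \<inter> Pi j))"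
      using C(2) P_sub Pi_disj by (intro card_eq_sum_card_Int[OF fin]) auto
    then have "real (card C) = (\<Sum>j\<in>{1..d}. c j)" by (simp add: c_def)
    moreover have "\<forall>k<2*m. psd_on {1..r+d} (Gamma \<tau> p q r (symx x) y k)"
      unfolding x_sym unfolding x_def y_def
      using Gamma_code_psd[where \<tau> = \<tau> and p = p, OF tau_sym Phi_psd fin] by blast
    moreover have "\<forall>i\<in>{1..r}. \<forall>j\<in>{1..d}. H_psd m (\<lambda>k. y k i j) (\<alpha> i j) (\<beta> i j)"
      unfolding y_def using \<alpha>\<beta>_bd by (auto intro: H_psd_code_y)
    moreover have "H_psd m (\<lambda>k. x k i j) (aa i j) (bb i j)" if "1 \<le> i" "i < j" "j \<le> d" for i j
      unfolding x_def using that Pi_disj[of i j] by (intro H_psd_code_x pair_bd) auto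
    moreover have "H_psd m (\<lambda>k. x k i i - c i * \<tau>0 ^ k) (aa i i) (bb i i)" if "i \<in> {1..d}" for i
      unfolding x_def c_def using that by (intro H_psd_code_x_diag[OF tau_diag fin] pair_bd) auto
    moreover have "Acon (symx x) y"
      unfolding x_sym unfolding x_def y_def using C by (rule Acon_codes)
    moreover have "\<forall>i\<in>{1..r}. \<forall>j\<in>{1..d}. y 0 i j = c j" by (simp add: y_def code_y_0 c_def)
    moreover have "psd_on {0..d} (Cmat c (symx x))"
      unfolding x_sym unfolding x_def by (rule psd_on_Cmat_rank_one) (simp add: code_x_0 c_def)
    moreover have "\<forall>j\<in>{1..d}. 0 \<le> c j" by (simp add: c_def)
    ultimately show ?thesis by blast
  qed
  then show ?thesis unfolding A_code_def by (auto intro!: Sup_subset_mono)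
qed

end
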